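(* Let $w_1, w_2 \geq 0$ with $w_1 + w_2 > 0$, and let $\sigma\approx 2.14790$ be the unique positive real root of $x^4 - 3x^2 - 3x - 1$. Both for the class of symmetric simultaneous two-player weighted congestion games with affine costs, proportional cost functions and player weights $w_1,w_2$, and for its subclass of network routing games, the price of anarchy (with respect to pure Nash equilibria) is equal to \begin{enumerate} \item[(a)] $\dfrac{ 2w_1^4 + 6w_1^3w_2 + 8w_1^2w_2^2 + 6w_1w_2^3 + 2w_2^4 }{ 2w_1^4 + 3w_1^3w_2 + 4w_1^2w_2^2 + 3w_1w_2^3 + 2w_2^4 + w_1w_2 \min(w_1^2,w_2^2) }$ if $\frac{w_2}{\sigma} \leq w_1 \leq \sigma w_2$; \item[(b)] $\dfrac{ 2w_1^3w_2 + 4w_1^2w_2^2 + 2w_1w_2^3 + 2\max(w_1^4+w_1^3w_2,\,w_1w_2^3+w_2^4) }{ w_1^3w_2 + 2w_1^2w_2^2 + w_1w_2^3 + 2w_1w_2 \min(w_1^2,w_2^2) + 2\max(w_1^4,w_2^4) + \min(w_1^4,w_2^4) }$ if $w_1 \geq \sigma w_2$ or $w_1 \leq \frac{w_2}{\sigma}$. \end{enumerate}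
   Context: A weighted two-player congestion game with affine costs consists of a finite set $R$ of resources, coefficients $\alpha_r,\beta_r \geq 0$ for each $r\in R$, two players $i=1,2$ with weights $w_i\ge 0$, and for each player $i$ a nonempty finite set $\mathcal{A}_i \subseteq 2^R$ of actions; it is symmetric if $\mathcal{A}_1=\mathcal{A}_2$. In a network routing game, $R$ is the arc set of a directed graph, player $i$ has a source $s_i$ and sink $t_i$, and $\mathcal{A}_i$ is the set of arc sets of directed $s_i$–$t_i$ paths (symmetric: common source and common sink). For an action profile $A=(A_1,A_2)$ the load of $r$ is $x_r(A)=\sum_{j:\, r\in A_j} w_j$. With proportional costs, player $i$ pays $C_i(A)=w_i\sum_{r\in A_i}(\alpha_r+\beta_r x_r(A))$. The social cost is $C(A)=C_1(A)+C_2(A)$. A pure Nash equilibrium is a profile from which no player can lower her cost by unilaterally changing her action. The price of anarchy of an instance is the maximum over Nash equilibria $A$ of $C(A)/\min_{A'} C(A')$; the price of anarchy of a class is the supremum over all instances (with positive optimal social cost). *)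

theory Defs
  imports Complex_Main "HOL-Library.Extended_Real"
begin

text \<open>Resources are natural numbers (every finite resource
set can be relabelled into nat).\<close>

definition load :: "real \<Rightarrow> real \<Rightarrow> nat set \<times> nat set \<Rightarrow> nat \<Rightarrow> real" where
  "load w1 w2 A r = (if r \<in> fst A then w1 else 0) + (if r \<in> snd A then w2 else 0)"

definition cost1 :: "real \<Rightarrow> real \<Rightarrow> (nat \<Rightarrow> real) \<Rightarrow> (nat \<Rightarrow> real) \<Rightarrow> nat set \<times> nat set \<Rightarrow> real" where
  "cost1 w1 w2 \<alpha> \<beta> A = w1 * (\<Sum>r\<in>fst A. \<alpha> r + \<beta> r * load w1 w2 A r)"

definition cost2 :: "real \<Rightarrow> real \<Rightarrow> (nat \<Rightarrow> real) \<Rightarrow> (nat \<Rightarrow> real) \<Rightarrow> nat set \<times> nat set \<Rightarrow> real" where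
  "cost2 w1 w2 \<alpha> \<beta> A = w2 * (\<Sum>r\<in>snd A. \<alpha> r + \<beta> r * load w1 w2 A r)"

definition social_cost :: "real \<Rightarrow> real \<Rightarrow> (nat \<Rightarrow> real) \<Rightarrow> (nat \<Rightarrow> real) \<Rightarrow> nat set \<times> nat set \<Rightarrow> real" where
  "social_cost w1 w2 \<alpha> \<beta> A = cost1 w1 w2 \<alpha> \<beta> A + cost2 w1 w2 \<alpha> \<beta> A"

definition is_NE :: "real \<Rightarrow> real \<Rightarrow> (nat \<Rightarrow> real) \<Rightarrow> (nat \<Rightarrow> real) \<Rightarrow> nat set set \<Rightarrow> nat set \<times> nat set \<Rightarrow> bool" where
  "is_NE w1 w2 \<alpha> \<beta> Acts A \<longleftrightarrow> A \<in> Acts \<times> Acts \<and>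
     (\<forall>a\<in>Acts. cost1 w1 w2 \<alpha> \<beta> A \<le> cost1 w1 w2 \<alpha> \<beta> (a, snd A)) \<and>
     (\<forall>a\<in>Acts. cost2 w1 w2 \<alpha> \<beta> A \<le> cost2 w1 w2 \<alpha> \<beta> (fst A, a))"

definition opt_cost :: "real \<Rightarrow> real \<Rightarrow> (nat \<Rightarrow> real) \<Rightarrow> (nat \<Rightarrow> real) \<Rightarrow> nat set set \<Rightarrow> real" where
  "opt_cost w1 w2 \<alpha> \<beta> Acts = Min (social_cost w1 w2 \<alpha> \<beta> ` (Acts \<times> Acts))"

definition poa_instance :: "real \<Rightarrow> real \<Rightarrow> (nat \<Rightarrow> real) \<Rightarrow> (nat \<Rightarrow> real) \<Rightarrow> nat set set \<Rightarrow> ereal" where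
  "poa_instance w1 w2 \<alpha> \<beta> Acts =
     Sup {ereal (social_cost w1 w2 \<alpha> \<beta> A / opt_cost w1 w2 \<alpha> \<beta> Acts) | A. is_NE w1 w2 \<alpha> \<beta> Acts A}"

definition poa_class :: "real \<Rightarrow> real \<Rightarrow> ((nat \<Rightarrow> real) \<times> (nat \<Rightarrow> real) \<times> nat set set) set \<Rightarrow> ereal" where
  "poa_class w1 w2 G =
     Sup {poa_instance w1 w2 \<alpha> \<beta> Acts | \<alpha> \<beta> Acts.
            (\<alpha>, \<beta>, Acts) \<in> G \<and> opt_cost w1 w2 \<alpha> \<beta> Acts > 0}"

definition sym_game :: "nat set \<Rightarrow> (nat \<Rightarrow> real) \<Rightarrow> (nat \<Rightarrow> real) \<Rightarrow> nat set set \<Rightarrow> bool" where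
  "sym_game R \<alpha> \<beta> Acts \<longleftrightarrow> finite R \<and> (\<forall>r\<in>R. \<alpha> r \<ge> 0 \<and> \<beta> r \<ge> 0) \<and>
     finite Acts \<and> Acts \<noteq> {} \<and> (\<forall>a\<in>Acts. a \<subseteq> R)"

definition sym_congestion_games :: "((nat \<Rightarrow> real) \<times> (nat \<Rightarrow> real) \<times> nat set set) set" where
  "sym_congestion_games = {(\<alpha>, \<beta>, Acts). \<exists>R. sym_game R \<alpha> \<beta> Acts}"

text \<open>Directed (multi)graphs: arcs are natural numbers with tail and head vertices.
A walk from u to v is a list of arcs; a path is a walk visiting distinct vertices.\<close>
fun walk :: "(nat \<Rightarrow> nat) \<Rightarrow> (nat \<Rightarrow> nat) \<Rightarrow> nat \<Rightarrow> nat \<Rightarrow> nat list \<Rightarrow> bool" where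
  "walk tail head u v [] \<longleftrightarrow> u = v"
| "walk tail head u v (e # es) \<longleftrightarrow> tail e = u \<and> walk tail head (head e) v es"

definition is_path :: "nat set \<Rightarrow> (nat \<Rightarrow> nat) \<Rightarrow> (nat \<Rightarrow> nat) \<Rightarrow> nat \<Rightarrow> nat \<Rightarrow> nat list \<Rightarrow> bool" where
  "is_path E tail head s t p \<longleftrightarrow> set p \<subseteq> E \<and> walk tail head s t p \<and> distinct (s # map head p)"

definition sym_network_games :: "((nat \<Rightarrow> real) \<times> (nat \<Rightarrow> real) \<times> nat set set) set" where
  "sym_network_games = {(\<alpha>, \<beta>, Acts). \<exists>E tail head s t.
      sym_game E \<alpha> \<beta> Acts \<and> Acts = {set p | p. is_path E tail head s t p}}"

definition sigma :: real where
  "sigma = (THE x. x > 0 \<and> x ^ 4 - 3 * x\<^sup>2 - 3 * x - 1 = 0)"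

end

(* Since the problem is symmetric in the two players, we may assume w1 >= w2.
   For the upper bound, take an equilibrium A and an optimum B and add to D C(A) - N C(B)
   nonnegative multiples of the four equilibrium inequalities in which a player deviates to one
   of the two optimal actions.  The sum splits over the resources, and for affine costs each
   resource term is, for each of the 16 ways the resource can be used, a polynomial in w1, w2;
   with D and N proportional to the claimed denominator and numerator and suitable multipliers
   all of these are nonpositive.  Which multipliers work depends on the sign of
   w1^3 - w1^2 w2 - 2 w1 w2^2 - w2^3, the homogenised cubic factor of
   x^4 - 3x^2 - 3x - 1 = (x + 1) (x^3 - x^2 - 2x - 1), that is, on whether w1 <= sigma w2.
   For the lower bound, a network with eight arcs and five source-sink paths, weighted differently
   in the two regimes, has an equilibrium whose cost, divided by the cost of a fixed profile, is
   the claimed value. *)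

theory Submission
  imports Defs "HOL-Library.Indicator_Function"
begin

section \<open>The constant sigma\<close>

definition sigma_cubic :: "real \<Rightarrow> real \<Rightarrow> real" where
  "sigma_cubic x y = x^3 - x^2*y - 2*x*y^2 - y^3"

lemma sigma_cubic_1: "sigma_cubic t 1 = t^3 - t^2 - 2*t - 1"
  by (simp add: sigma_cubic_def)

lemma sigma_quartic_eq: "t^4 - 3*t\<^sup>2 - 3*t - 1 = (t + 1) * sigma_cubic t 1"
  unfolding sigma_cubic_1 by algebra

lemma sigma_cubic_neg:
  assumes "0 < t" "t \<le> 2"
  shows "sigma_cubic t 1 < 0"
proof -
  have "t * ((t - 2) * (t + 1)) \<le> 0"
    using assms by (intro mult_nonneg_nonpos mult_nonpos_nonneg) auto
  moreover have "sigma_cubic t 1 = t * ((t - 2) * (t + 1)) - 1"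
    unfolding sigma_cubic_1 by algebra
  ultimately show ?thesis by linarith
qed

lemma sigma_cubic_strict_mono:
  assumes "2 \<le> s" "s < t"
  shows "sigma_cubic s 1 < sigma_cubic t 1"
proof -
  have "2 * s \<le> s * s" "2 * t \<le> t * t" "2 * 2 \<le> t * s"
    using assms mult_mono[of 2 t 2 s] by (auto intro: mult_right_mono)
  then have "0 < t*t + t*s + s*s - t - s - 2" using assms by linarith
  moreover have "sigma_cubic t 1 - sigma_cubic s 1 = (t - s) * (t*t + t*s + s*s - t - s - 2)"
    unfolding sigma_cubic_1 by algebra
  ultimately show ?thesis using assms by (metis diff_gt_0_iff_gt mult_pos_pos)
qed

lemma sigma_root: "2 < sigma" "sigma_cubic sigma 1 = 0"
proof -
  have "\<exists>r\<ge>2. r \<le> 3 \<and> sigma_cubic r 1 = 0"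
    by (rule IVT) (auto simp: sigma_cubic_1 intro: continuous_intros)
  then obtain r where r: "2 \<le> r" "r \<le> 3" "sigma_cubic r 1 = 0" by blast
  have "r \<noteq> 2" using r(3) sigma_cubic_neg[of 2] by auto
  with r have r2: "2 < r" by simp
  have "sigma = r"
    unfolding sigma_def
  proof (rule the_equality)
    show "0 < r \<and> r^4 - 3*r\<^sup>2 - 3*r - 1 = 0"
      using r r2 by (simp add: sigma_quartic_eq)
  next
    fix t :: real
    assume t: "0 < t \<and> t^4 - 3*t\<^sup>2 - 3*t - 1 = 0"
    then have "sigma_cubic t 1 = 0" by (auto simp: sigma_quartic_eq)
    moreover from this have "2 < t" using t sigma_cubic_neg[of t] by fastforce
    ultimately show "t = r"
      using r2 r(3) sigma_cubic_strict_mono[of t r] sigma_cubic_strict_mono[of r t]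
      by (cases t r rule: linorder_cases) simp_all
  qed
  then show "2 < sigma" "sigma_cubic sigma 1 = 0" using r(3) r2 by simp_all
qed

lemma sigma_cubic_homogeneous: "0 < y \<Longrightarrow> sigma_cubic x y = y^3 * sigma_cubic (x / y) 1"
  unfolding sigma_cubic_def by (simp add: field_simps power3_eq_cube power2_eq_square)

lemma sigma_cubic_mono: "2 \<le> s \<Longrightarrow> s \<le> t \<Longrightarrow> sigma_cubic s 1 \<le> sigma_cubic t 1"
  using sigma_cubic_strict_mono[of s t] by (cases "s = t") simp_all

lemma sigma_cubic_nonpos:
  assumes "0 < x" "x \<le> sigma * y"
  shows "sigma_cubic x y \<le> 0"
proof -
  have "0 < sigma * y" using assms by linarith
  then have y: "0 < y" using sigma_root(1) by (simp add: zero_less_mult_iff)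
  then have t: "0 < x / y" "x / y \<le> sigma"
    using assms by (simp_all add: divide_le_eq mult.commute)
  have "sigma_cubic (x / y) 1 \<le> 0"
  proof (cases "x / y \<le> 2")
    case True
    then show ?thesis using sigma_cubic_neg[OF t(1)] by simp
  next
    case False
    then show ?thesis using sigma_cubic_mono[OF _ t(2)] sigma_root(2) by simp
  qed
  then show ?thesis using y by (simp add: sigma_cubic_homogeneous[OF y] mult_nonneg_nonpos)
qed

lemma sigma_cubic_nonneg:
  assumes "0 \<le> y" "sigma * y \<le> x"
  shows "0 \<le> sigma_cubic x y"
proof (cases "y = 0")
  case True
  then show ?thesis using assms sigma_root(1) by (simp add: sigma_cubic_def)
next
  case False
  with assms have y: "0 < y" by simp
  then have "sigma \<le> x / y" using assms by (simp add: le_divide_eq)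
  then have "0 \<le> sigma_cubic (x / y) 1"
    using sigma_cubic_mono[of sigma "x / y"] sigma_root by simp
  then show ?thesis using y by (simp add: sigma_cubic_homogeneous[OF y])
qed

section \<open>Exchanging the two players\<close>

lemma cost1_swap: "cost1 w1 w2 \<alpha> \<beta> A = cost2 w2 w1 \<alpha> \<beta> (prod.swap A)"
  by (cases A) (simp add: cost1_def cost2_def load_def add.commute)

lemma cost2_swap: "cost2 w1 w2 \<alpha> \<beta> A = cost1 w2 w1 \<alpha> \<beta> (prod.swap A)"
  by (cases A) (simp add: cost1_def cost2_def load_def add.commute)

lemma social_cost_swap: "social_cost w1 w2 \<alpha> \<beta> A = social_cost w2 w1 \<alpha> \<beta> (prod.swap A)"
  by (simp add: social_cost_def cost1_swap[of w1 w2] cost2_swap[of w1 w2])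

lemma is_NE_swap: "is_NE w1 w2 \<alpha> \<beta> Acts A \<longleftrightarrow> is_NE w2 w1 \<alpha> \<beta> Acts (prod.swap A)"
  by (cases A) (auto simp: is_NE_def cost1_swap[of w1 w2] cost2_swap[of w1 w2])

lemma opt_cost_swap: "opt_cost w1 w2 \<alpha> \<beta> Acts = opt_cost w2 w1 \<alpha> \<beta> Acts"
proof -
  have "social_cost w1 w2 \<alpha> \<beta> ` (Acts \<times> Acts) = social_cost w2 w1 \<alpha> \<beta> ` prod.swap ` (Acts \<times> Acts)"
    by (simp add: image_image social_cost_swap[of w1 w2])
  then show ?thesis by (simp add: opt_cost_def product_swap)
qed

lemma poa_instance_swap: "poa_instance w1 w2 \<alpha> \<beta> Acts = poa_instance w2 w1 \<alpha> \<beta> Acts"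
proof -
  have "{ereal (social_cost w1 w2 \<alpha> \<beta> A / opt_cost w1 w2 \<alpha> \<beta> Acts) | A. is_NE w1 w2 \<alpha> \<beta> Acts A}
      = {ereal (social_cost w2 w1 \<alpha> \<beta> A / opt_cost w2 w1 \<alpha> \<beta> Acts) | A. is_NE w2 w1 \<alpha> \<beta> Acts A}"
    by (metis (no_types, opaque_lifting) is_NE_swap opt_cost_swap social_cost_swap)
  then show ?thesis by (simp add: poa_instance_def)
qed

lemma poa_class_swap: "poa_class w1 w2 G = poa_class w2 w1 G"
  unfolding poa_class_def by (simp add: poa_instance_swap[of w1 w2] opt_cost_swap[of w1 w2])

section \<open>Upper bounds from resource-wise certificates\<close>

definition res_cost1 :: "real \<Rightarrow> real \<Rightarrow> real \<Rightarrow> real \<Rightarrow> real \<Rightarrow> real \<Rightarrow> real" where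
  "res_cost1 x y a b \<alpha> \<beta> = x * a * (\<alpha> + \<beta> * (x * a + y * b))"

definition res_cost2 :: "real \<Rightarrow> real \<Rightarrow> real \<Rightarrow> real \<Rightarrow> real \<Rightarrow> real \<Rightarrow> real" where
  "res_cost2 x y a b \<alpha> \<beta> = y * b * (\<alpha> + \<beta> * (x * a + y * b))"

lemma cost1_eq_sum_res_cost1:
  assumes "finite U" "X \<subseteq> U" "Y \<subseteq> U"
  shows "cost1 x y \<alpha> \<beta> (X, Y) = (\<Sum>r\<in>U. res_cost1 x y (indicator X r) (indicator Y r) (\<alpha> r) (\<beta> r))"
proof -
  have "(\<Sum>r\<in>U. res_cost1 x y (indicator X r) (indicator Y r) (\<alpha> r) (\<beta> r))
      = (\<Sum>r\<in>X. res_cost1 x y (indicator X r) (indicator Y r) (\<alpha> r) (\<beta> r))"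
    using assms by (intro sum.mono_neutral_right) (auto simp: res_cost1_def)
  also have "\<dots> = cost1 x y \<alpha> \<beta> (X, Y)"
    by (auto simp: cost1_def sum_distrib_left res_cost1_def load_def intro!: sum.cong)
  finally show ?thesis by simp
qed

lemma cost2_eq_sum_res_cost2:
  assumes "finite U" "X \<subseteq> U" "Y \<subseteq> U"
  shows "cost2 x y \<alpha> \<beta> (X, Y) = (\<Sum>r\<in>U. res_cost2 x y (indicator X r) (indicator Y r) (\<alpha> r) (\<beta> r))"
proof -
  have "(\<Sum>r\<in>U. res_cost2 x y (indicator X r) (indicator Y r) (\<alpha> r) (\<beta> r))
      = (\<Sum>r\<in>Y. res_cost2 x y (indicator X r) (indicator Y r) (\<alpha> r) (\<beta> r))"
    using assms by (intro sum.mono_neutral_right) (auto simp: res_cost2_def)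
  also have "\<dots> = cost2 x y \<alpha> \<beta> (X, Y)"
    by (auto simp: cost2_def sum_distrib_left res_cost2_def load_def intro!: sum.cong)
  finally show ?thesis by simp
qed

(* In a symmetric game each player may deviate to either optimal action, so four equilibrium
   inequalities, weighted by m1, ..., m4, are available. *)
definition resource_combination :: "real \<Rightarrow> real \<Rightarrow> real \<Rightarrow> real \<Rightarrow> real \<Rightarrow> real \<Rightarrow> real \<Rightarrow> real \<Rightarrow>
    real \<Rightarrow> real \<Rightarrow> real \<Rightarrow> real \<Rightarrow> real \<Rightarrow> real \<Rightarrow> real" where
  "resource_combination x y D N m1 m2 m3 m4 a1 a2 b1 b2 \<alpha> \<beta> =
     D * (res_cost1 x y a1 a2 \<alpha> \<beta> + res_cost2 x y a1 a2 \<alpha> \<beta>)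
     - N * (res_cost1 x y b1 b2 \<alpha> \<beta> + res_cost2 x y b1 b2 \<alpha> \<beta>)
     + m1 * (res_cost1 x y b1 a2 \<alpha> \<beta> - res_cost1 x y a1 a2 \<alpha> \<beta>)
     + m2 * (res_cost1 x y b2 a2 \<alpha> \<beta> - res_cost1 x y a1 a2 \<alpha> \<beta>)
     + m3 * (res_cost2 x y a1 b1 \<alpha> \<beta> - res_cost2 x y a1 a2 \<alpha> \<beta>)
     + m4 * (res_cost2 x y a1 b2 \<alpha> \<beta> - res_cost2 x y a1 a2 \<alpha> \<beta>)"

lemma sum_resource_combination:
  assumes "finite U" "A1 \<subseteq> U" "A2 \<subseteq> U" "B1 \<subseteq> U" "B2 \<subseteq> U"
  shows "(\<Sum>r\<in>U. resource_combination x y D N m1 m2 m3 m4 (indicator A1 r) (indicator A2 r)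
            (indicator B1 r) (indicator B2 r) (\<alpha> r) (\<beta> r))
       = D * social_cost x y \<alpha> \<beta> (A1, A2) - N * social_cost x y \<alpha> \<beta> (B1, B2)
         + m1 * (cost1 x y \<alpha> \<beta> (B1, A2) - cost1 x y \<alpha> \<beta> (A1, A2))
         + m2 * (cost1 x y \<alpha> \<beta> (B2, A2) - cost1 x y \<alpha> \<beta> (A1, A2))
         + m3 * (cost2 x y \<alpha> \<beta> (A1, B1) - cost2 x y \<alpha> \<beta> (A1, A2))
         + m4 * (cost2 x y \<alpha> \<beta> (A1, B2) - cost2 x y \<alpha> \<beta> (A1, A2))"
  using assms
  by (simp add: social_cost_def cost1_eq_sum_res_cost1[OF assms(1)] cost2_eq_sum_res_cost2[OF assms(1)]
      resource_combination_def sum.distrib sum_subtractf sum_distrib_left right_diff_distrib distrib_left)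

definition poa_certificate :: "real \<Rightarrow> real \<Rightarrow> real \<Rightarrow> real \<Rightarrow> real \<Rightarrow> real \<Rightarrow> real \<Rightarrow> real \<Rightarrow> bool" where
  "poa_certificate x y D N m1 m2 m3 m4 \<longleftrightarrow> 0 < D \<and> 0 \<le> m1 \<and> 0 \<le> m2 \<and> 0 \<le> m3 \<and> 0 \<le> m4 \<and>
     (\<forall>a1\<in>{0,1}. \<forall>a2\<in>{0,1}. \<forall>b1\<in>{0,1}. \<forall>b2\<in>{0,1}. \<forall>\<alpha>\<ge>0. \<forall>\<beta>\<ge>0.
        resource_combination x y D N m1 m2 m3 m4 a1 a2 b1 b2 \<alpha> \<beta> \<le> 0)"

lemma social_cost_le_by_certificate:
  assumes cert: "poa_certificate x y D N m1 m2 m3 m4"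
    and game: "sym_game R \<alpha> \<beta> Acts" and NE: "is_NE x y \<alpha> \<beta> Acts (A1, A2)"
    and B: "B1 \<in> Acts" "B2 \<in> Acts"
  shows "D * social_cost x y \<alpha> \<beta> (A1, A2) \<le> N * social_cost x y \<alpha> \<beta> (B1, B2)"
proof -
  have R: "finite R" "\<forall>a\<in>Acts. a \<subseteq> R" "\<forall>r\<in>R. \<alpha> r \<ge> 0 \<and> \<beta> r \<ge> 0"
    using game by (auto simp: sym_game_def)
  have sub: "A1 \<subseteq> R" "A2 \<subseteq> R" "B1 \<subseteq> R" "B2 \<subseteq> R" using NE B R(2) by (auto simp: is_NE_def)
  have "(\<Sum>r\<in>R. resource_combination x y D N m1 m2 m3 m4 (indicator A1 r) (indicator A2 r)
            (indicator B1 r) (indicator B2 r) (\<alpha> r) (\<beta> r)) \<le> 0"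
    using cert R(3) by (intro sum_nonpos) (simp add: poa_certificate_def indicator_def)
  moreover have "0 \<le> m1 * (cost1 x y \<alpha> \<beta> (B1, A2) - cost1 x y \<alpha> \<beta> (A1, A2))"
    "0 \<le> m2 * (cost1 x y \<alpha> \<beta> (B2, A2) - cost1 x y \<alpha> \<beta> (A1, A2))"
    "0 \<le> m3 * (cost2 x y \<alpha> \<beta> (A1, B1) - cost2 x y \<alpha> \<beta> (A1, A2))"
    "0 \<le> m4 * (cost2 x y \<alpha> \<beta> (A1, B2) - cost2 x y \<alpha> \<beta> (A1, A2))"
    using cert NE B by (simp_all add: poa_certificate_def is_NE_def)
  ultimately show ?thesis unfolding sum_resource_combination[OF R(1) sub] by linarith
qed

lemma poa_instance_le_by_certificate:
  assumes cert: "poa_certificate x y D N m1 m2 m3 m4"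
    and game: "sym_game R \<alpha> \<beta> Acts" and opt: "0 < opt_cost x y \<alpha> \<beta> Acts"
  shows "poa_instance x y \<alpha> \<beta> Acts \<le> ereal (N / D)"
  unfolding poa_instance_def
proof (rule Sup_least, clarify)
  fix A1 A2 assume NE: "is_NE x y \<alpha> \<beta> Acts (A1, A2)"
  have "opt_cost x y \<alpha> \<beta> Acts \<in> social_cost x y \<alpha> \<beta> ` (Acts \<times> Acts)"
    unfolding opt_cost_def using game by (intro Min_in) (auto simp: sym_game_def)
  then obtain B1 B2 where "B1 \<in> Acts" "B2 \<in> Acts"
    and optB: "opt_cost x y \<alpha> \<beta> Acts = social_cost x y \<alpha> \<beta> (B1, B2)" by auto
  then have "D * social_cost x y \<alpha> \<beta> (A1, A2) \<le> N * opt_cost x y \<alpha> \<beta> Acts"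
    using social_cost_le_by_certificate[OF cert game NE] by simp
  moreover have "0 < D" using cert by (simp add: poa_certificate_def)
  ultimately show "ereal (social_cost x y \<alpha> \<beta> (A1, A2) / opt_cost x y \<alpha> \<beta> Acts) \<le> ereal (N / D)"
    using opt by (simp add: divide_le_eq le_divide_eq field_simps)
qed

lemma poa_class_le_by_certificate:
  assumes "G \<in> {sym_congestion_games, sym_network_games}" "poa_certificate x y D N m1 m2 m3 m4"
  shows "poa_class x y G \<le> ereal (N / D)"
  unfolding poa_class_def
proof (rule Sup_least, clarify)
  fix \<alpha> \<beta> Acts assume "(\<alpha>, \<beta>, Acts) \<in> G" "0 < opt_cost x y \<alpha> \<beta> Acts"
  moreover from this obtain R where "sym_game R \<alpha> \<beta> Acts"
    using assms(1) by (auto simp: sym_congestion_games_def sym_network_games_def)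
  ultimately show "poa_instance x y \<alpha> \<beta> Acts \<le> ereal (N / D)"
    using poa_instance_le_by_certificate[OF assms(2)] by blast
qed

lemma resource_combination_linear:
  "resource_combination x y D N m1 m2 m3 m4 a1 a2 b1 b2 \<alpha> \<beta>
     = \<alpha> * resource_combination x y D N m1 m2 m3 m4 a1 a2 b1 b2 1 0 + \<beta> * resource_combination x y D N m1 m2 m3 m4 a1 a2 b1 b2 0 1"
  by (simp add: resource_combination_def res_cost1_def res_cost2_def algebra_simps)

lemma resource_combination_constant_part:
  "resource_combination x y D N m1 m2 m3 m4 a1 a2 b1 b2 1 0
     = a1 * x * (D - m1 - m2) + a2 * y * (D - m3 - m4) + b1 * (m1 * x + m3 * y - N * x)
       + b2 * (m2 * x + m4 * y - N * y)"
  by (simp add: resource_combination_def res_cost1_def res_cost2_def algebra_simps)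

lemma poa_certificate_intro:
  assumes xy: "0 \<le> x" "0 \<le> y" and D: "0 < D" and m: "0 \<le> m1" "0 \<le> m2" "0 \<le> m3" "0 \<le> m4"
    and constant_part: "0 \<le> m1 + m2 - D" "0 \<le> m3 + m4 - D" "0 \<le> N * x - m1 * x - m3 * y"
      "0 \<le> N * y - m2 * x - m4 * y"
    and linear_part: "\<forall>a1\<in>{0,1}. \<forall>a2\<in>{0,1}. \<forall>b1\<in>{0,1}. \<forall>b2\<in>{0,1}.
      resource_combination x y D N m1 m2 m3 m4 a1 a2 b1 b2 0 1 \<le> 0"
  shows "poa_certificate x y D N m1 m2 m3 m4"
  unfolding poa_certificate_def
proof (intro conjI D m ballI allI impI)
  fix a1 a2 b1 b2 \<alpha> \<beta> :: real
  assume bits: "a1 \<in> {0,1}" "a2 \<in> {0,1}" "b1 \<in> {0,1}" "b2 \<in> {0,1}" and "0 \<le> \<alpha>" "0 \<le> \<beta>"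
  have "a1 * x * (D - m1 - m2) \<le> 0" "a2 * y * (D - m3 - m4) \<le> 0"
    "b1 * (m1 * x + m3 * y - N * x) \<le> 0" "b2 * (m2 * x + m4 * y - N * y) \<le> 0"
    using bits xy constant_part by (auto intro: mult_nonneg_nonpos)
  then have "resource_combination x y D N m1 m2 m3 m4 a1 a2 b1 b2 1 0 \<le> 0"
    unfolding resource_combination_constant_part by linarith
  moreover have "resource_combination x y D N m1 m2 m3 m4 a1 a2 b1 b2 0 1 \<le> 0"
    using linear_part bits by blast
  ultimately show "resource_combination x y D N m1 m2 m3 m4 a1 a2 b1 b2 \<alpha> \<beta> \<le> 0"
    unfolding resource_combination_linear[of x y D N m1 m2 m3 m4 a1 a2 b1 b2 \<alpha> \<beta>] using \<open>0 \<le> \<alpha>\<close> \<open>0 \<le> \<beta>\<close>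
    by (simp add: add_nonpos_nonpos mult_nonneg_nonpos)
qed

lemmas nonneg_intros = add_nonneg_nonneg mult_nonneg_nonneg zero_le_power

definition num_A :: "real \<Rightarrow> real \<Rightarrow> real" where
  "num_A x y = 2*x^4 + 6*x^3*y + 8*x^2*y^2 + 6*x*y^3 + 2*y^4"

definition den_A :: "real \<Rightarrow> real \<Rightarrow> real" where
  "den_A x y = 2*x^4 + 3*x^3*y + 4*x^2*y^2 + 4*x*y^3 + 2*y^4"

lemma poa_certificate_A:
  assumes "0 < x" "0 \<le> y" "y \<le> x" "sigma_cubic x y \<le> 0"
  shows "poa_certificate x y (den_A x y) (num_A x y)
    (2*x^4 + 4*x^3*y + 3*x^2*y^2) (3*x^2*y^2 + 4*x*y^3 + 2*y^4)
    (3*x^4 + 4*x^3*y + 2*x^2*y^2) (x^4 + 2*x^2*y^2 + 4*x*y^3 + 2*y^4)"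
    (is "poa_certificate x y ?D ?N ?m1 ?m2 ?m3 ?m4")
proof -
  have nonneg: "0 \<le> x" "0 \<le> y" "0 \<le> x - y" "0 \<le> - sigma_cubic x y" using assms by auto
  let ?g = "resource_combination x y ?D ?N ?m1 ?m2 ?m3 ?m4"
  have constant_part: "?m1 + ?m2 - ?D = x^2*y*(x + 2*y)"
    "?m3 + ?m4 - ?D = x^3*(2*x + y)"
    "?N * x - ?m1 * x - ?m3 * y = x*y^3*(2*x + y) + x*y*(- sigma_cubic x y)"
    "?N * y - ?m2 * x - ?m4 * y = x^2*y*(x + y)*(x + 2*y)"
    unfolding den_A_def num_A_def sigma_cubic_def by algebra+
  have linear_part:
    "?g 0 0 0 0 0 1 = 0"
    "?g 0 0 0 1 0 1 = - (2*x*y^2*(- sigma_cubic x y))"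
    "?g 0 0 1 0 0 1 = - (2*x^3*y*(x^2 + x*y + y^2))"
    "?g 0 0 1 1 0 1 = - (2*x*y*(3*x^4 + 6*x^3*y + 10*x^2*y^2 + 8*x*y^3 + 3*y^4))"
    "?g 0 1 0 0 0 1 = - (x^3*y^2*(2*x + y))"
    "?g 0 1 0 1 0 1 = 0"
    "?g 0 1 1 0 0 1 = 0"
    "?g 0 1 1 1 0 1 = - (x*y*(4*x^4 + 10*x^3*y + 15*x^2*y^2 + 12*x*y^3 + 4*y^4))"
    "?g 1 0 0 0 0 1 = - (x^4*y*(x + 2*y))"
    "?g 1 0 0 1 0 1 = 0"
    "?g 1 0 1 0 0 1 = 0"
    "?g 1 0 1 1 0 1 = - (x*y*(3*x^4 + 10*x^3*y + 16*x^2*y^2 + 12*x*y^3 + 4*y^4))"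
    "?g 1 1 0 0 0 1 = - (3*x^3*y*(x + y)^2)"
    "?g 1 1 0 1 0 1 = - (2*x*y*(x - y)*(x + y)^3)"
    "?g 1 1 1 0 0 1 = 0"
    "?g 1 1 1 1 0 1 = - (x*y*(3*x^4 + 10*x^3*y + 13*x^2*y^2 + 8*x*y^3 + 2*y^4))"
    unfolding resource_combination_def res_cost1_def res_cost2_def den_A_def num_A_def sigma_cubic_def
    by algebra+
  show ?thesis
  proof (rule poa_certificate_intro)
    show "0 \<le> ?m1 + ?m2 - ?D" "0 \<le> ?m3 + ?m4 - ?D" "0 \<le> ?N * x - ?m1 * x - ?m3 * y"
      "0 \<le> ?N * y - ?m2 * x - ?m4 * y"
      unfolding constant_part by (intro nonneg_intros | simp add: nonneg assms)+
    show "\<forall>a1\<in>{0,1}. \<forall>a2\<in>{0,1}. \<forall>b1\<in>{0,1}. \<forall>b2\<in>{0,1}. ?g a1 a2 b1 b2 0 1 \<le> 0"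
      unfolding ball_simps linear_part neg_le_0_iff_le by (intro conjI nonneg_intros | simp add: nonneg assms)+
    show "0 < ?D" using assms by (simp add: den_A_def add_pos_nonneg)
  qed (intro nonneg_intros | simp add: nonneg assms)+
qed

definition num_B :: "real \<Rightarrow> real \<Rightarrow> real" where
  "num_B x y = 2*x^4 + 4*x^3*y + 4*x^2*y^2 + 2*x*y^3"

definition den_B :: "real \<Rightarrow> real \<Rightarrow> real" where
  "den_B x y = 2*x^4 + x^3*y + 2*x^2*y^2 + 3*x*y^3 + y^4"

lemma poa_certificate_B:
  assumes "0 < x" "0 \<le> y" "0 \<le> sigma_cubic x y"
  shows "poa_certificate x y (x*(2*x + y)*den_B x y) (x*(2*x + y)*num_B x y)
    (4*x^6 + 6*x^5*y + 4*x^4*y^2 + x^3*y^3 - 2*x^2*y^4 - 3*x*y^5 - y^6)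
    (2*x^4*y^2 + 9*x^3*y^3 + 10*x^2*y^4 + 5*x*y^5 + y^6)
    (2*x^6 + 5*x^5*y + 12*x^4*y^2 + 15*x^3*y^3 + 9*x^2*y^4 + 2*x*y^5)
    (2*x^6 + x^5*y + 2*x^4*y^2 + 3*x^3*y^3 + x^2*y^4)"
    (is "poa_certificate x y ?D ?N ?m1 ?m2 ?m3 ?m4")
proof -
  \<comment> \<open>Polynomials with negative coefficients are written as Q * sigma_cubic x y + R, where
    Q and R have nonnegative coefficients.\<close>
  have nonneg: "0 \<le> x" "0 \<le> y" using assms by auto
  let ?c = "sigma_cubic x y"
  let ?g = "resource_combination x y ?D ?N ?m1 ?m2 ?m3 ?m4"
  have m1: "?m1 = (4*x^3 + 10*x^2*y + 22*x*y^2 + 47*y^3)*?c + y^4*(99*x^2 + 113*x*y + 46*y^2)"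
    unfolding sigma_cubic_def by algebra
  have constant_part: "?m1 + ?m2 - ?D = x*y*(2*x^4 + x^3*y + 2*x^2*y^2 + 3*x*y^3 + y^4)"
    "?m3 + ?m4 - ?D = x*y*(2*x^4 + 9*x^3*y + 10*x^2*y^2 + 5*x*y^3 + y^4)"
    "?N * x - ?m1 * x - ?m3 * y
       = y*((2*x^3 + 5*x^2*y + 4*x*y^2 + 5*y^3)*?c + y^4*(12*x^2 + 13*x*y + 5*y^2))"
    "?N * y - ?m2 * x - ?m4 * y
       = y*((2*x^3 + 9*x^2*y + 14*x*y^2 + 29*y^3)*?c + y^4*(62*x^2 + 71*x*y + 29*y^2))"
    unfolding den_B_def num_B_def sigma_cubic_def by algebra+
  have linear_part:
    "?g 0 0 0 0 0 1 = 0"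
    "?g 0 0 0 1 0 1 = 0"
    "?g 0 0 1 0 0 1
       = - (y*((4*x^4 + 10*x^3*y + 20*x^2*y^2 + 36*x*y^3 + 74*y^4)*?c + y^5*(158*x^2 + 182*x*y + 74*y^2)))"
    "?g 0 0 1 1 0 1
       = - (y*((12*x^4 + 38*x^3*y + 88*x^2*y^2 + 184*x*y^3 + 390*y^4)*?c + y^5*(838*x^2 + 962*x*y + 390*y^2)))"
    "?g 0 1 0 0 0 1 = - (x*y^3*(2*x^4 + 9*x^3*y + 10*x^2*y^2 + 5*x*y^3 + y^4))"
    "?g 0 1 0 1 0 1 = 0"
    "?g 0 1 1 0 0 1 = 0"
    "?g 0 1 1 1 0 1
       = - (y*((8*x^4 + 28*x^3*y + 66*x^2*y^2 + 137*x*y^3 + 291*y^4)*?c + y^5*(626*x^2 + 718*x*y + 291*y^2)))"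
    "?g 1 0 0 0 0 1 = - (x^3*y*(2*x^4 + x^3*y + 2*x^2*y^2 + 3*x*y^3 + y^4))"
    "?g 1 0 0 1 0 1 = 0"
    "?g 1 0 1 0 0 1 = - (2*x*y*(2*x^3 + 3*x^2*y + 3*x*y^2 + y^3)*?c)"
    "?g 1 0 1 1 0 1
       = - (y*((10*x^4 + 31*x^3*y + 65*x^2*y^2 + 130*x*y^3 + 274*y^4)*?c + y^5*(589*x^2 + 676*x*y + 274*y^2)))"
    "?g 1 1 0 0 0 1 = - (x*y*(2*x^6 + 5*x^5*y + 14*x^4*y^2 + 24*x^3*y^3 + 19*x^2*y^4 + 7*x*y^5 + y^6))"
    "?g 1 1 0 1 0 1 = - (2*x^2*y^2*(2*x^4 + 5*x^3*y + 6*x^2*y^2 + 4*x*y^3 + y^4))"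
    "?g 1 1 1 0 0 1 = 0"
    "?g 1 1 1 1 0 1
       = - (y*((6*x^4 + 25*x^3*y + 57*x^2*y^2 + 117*x*y^3 + 249*y^4)*?c + y^5*(535*x^2 + 614*x*y + 249*y^2)))"
    unfolding resource_combination_def res_cost1_def res_cost2_def den_B_def num_B_def sigma_cubic_def
    by algebra+
  show ?thesis
  proof (rule poa_certificate_intro)
    show "0 \<le> ?m1" unfolding m1 by (intro nonneg_intros | simp add: nonneg assms)+
    show "0 \<le> ?m1 + ?m2 - ?D" "0 \<le> ?m3 + ?m4 - ?D" "0 \<le> ?N * x - ?m1 * x - ?m3 * y"
      "0 \<le> ?N * y - ?m2 * x - ?m4 * y"
      unfolding constant_part by (intro nonneg_intros | simp add: nonneg assms)+
    show "\<forall>a1\<in>{0,1}. \<forall>a2\<in>{0,1}. \<forall>b1\<in>{0,1}. \<forall>b2\<in>{0,1}. ?g a1 a2 b1 b2 0 1 \<le> 0"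
      unfolding ball_simps linear_part neg_le_0_iff_le by (intro conjI nonneg_intros | simp add: nonneg assms)+
    show "0 < ?D" using assms by (simp add: den_B_def add_pos_nonneg)
  qed (intro nonneg_intros | simp add: nonneg assms)+
qed

section \<open>Lower bounds from a network gadget\<close>

lemma poa_class_ge_ratio:
  assumes G: "(\<alpha>, \<beta>, Acts) \<in> G" and fin: "finite Acts" and NE: "is_NE x y \<alpha> \<beta> Acts A"
    and B: "B \<in> Acts \<times> Acts" and pos: "\<And>P. P \<in> Acts \<times> Acts \<Longrightarrow> 0 < social_cost x y \<alpha> \<beta> P"
  shows "ereal (social_cost x y \<alpha> \<beta> A / social_cost x y \<alpha> \<beta> B) \<le> poa_class x y G"
proof -
  have costs: "finite (social_cost x y \<alpha> \<beta> ` (Acts \<times> Acts))"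
    "social_cost x y \<alpha> \<beta> ` (Acts \<times> Acts) \<noteq> {}" using fin B by auto
  have opt: "0 < opt_cost x y \<alpha> \<beta> Acts" "opt_cost x y \<alpha> \<beta> Acts \<le> social_cost x y \<alpha> \<beta> B"
    unfolding opt_cost_def using B pos by (auto simp: Min_gr_iff[OF costs] intro!: Min_le[OF costs(1)])
  have "0 \<le> social_cost x y \<alpha> \<beta> A" using NE pos by (simp add: is_NE_def less_imp_le)
  then have "social_cost x y \<alpha> \<beta> A / social_cost x y \<alpha> \<beta> B
      \<le> social_cost x y \<alpha> \<beta> A / opt_cost x y \<alpha> \<beta> Acts"
    using opt by (intro divide_left_mono) auto
  then have "ereal (social_cost x y \<alpha> \<beta> A / social_cost x y \<alpha> \<beta> B)
      \<le> ereal (social_cost x y \<alpha> \<beta> A / opt_cost x y \<alpha> \<beta> Acts)" by simp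
  also have "\<dots> \<le> poa_instance x y \<alpha> \<beta> Acts"
    unfolding poa_instance_def using NE by (intro Sup_upper) blast
  also have "\<dots> \<le> poa_class x y G"
    unfolding poa_class_def using G opt(1) by (intro Sup_upper) blast
  finally show ?thesis .
qed

definition gadget_arcs :: "nat set" where
  "gadget_arcs = {0, 1, 2, 3, 4, 5, 6, 7}"

definition gadget_tail :: "nat \<Rightarrow> nat" where
  "gadget_tail e = [0, 0, 1, 2, 3, 3, 1, 4] ! e"

definition gadget_head :: "nat \<Rightarrow> nat" where
  "gadget_head e = [1, 2, 2, 3, 5, 4, 4, 5] ! e"

definition gadget_walks :: "nat \<Rightarrow> nat list set" where
  "gadget_walks u = [{[0,2,3,4], [0,2,3,5,7], [0,6,7], [1,3,4], [1,3,5,7]},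
                     {[2,3,4], [2,3,5,7], [6,7]}, {[3,4], [3,5,7]}, {[4], [5,7]}, {[7]}, {[]}] ! u"

definition gadget_paths :: "nat set set" where
  "gadget_paths = {{0,2,3,4}, {0,2,3,5,7}, {0,6,7}, {1,3,4}, {1,3,5,7}}"

lemma walk_to_sink_in_gadget_walks:
  "set p \<subseteq> gadget_arcs \<Longrightarrow> walk gadget_tail gadget_head u 5 p \<Longrightarrow> u \<le> 5 \<Longrightarrow> p \<in> gadget_walks u"
proof (induction p arbitrary: u)
  case Nil
  then show ?case by (simp add: gadget_walks_def)
next
  case (Cons e p)
  then have e: "e \<in> gadget_arcs" "gadget_tail e = u" and "set p \<subseteq> gadget_arcs"
    and "walk gadget_tail gadget_head (gadget_head e) 5 p" by auto
  moreover have "gadget_head e \<le> 5" using e(1) by (auto simp: gadget_arcs_def gadget_head_def)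
  ultimately have "p \<in> gadget_walks (gadget_head e)" using Cons.IH by blast
  then show ?case using e
    by (auto simp: gadget_arcs_def gadget_tail_def gadget_head_def gadget_walks_def)
qed

lemma gadget_paths_eq: "gadget_paths = {set p | p. is_path gadget_arcs gadget_tail gadget_head 0 5 p}"
proof -
  have "is_path gadget_arcs gadget_tail gadget_head 0 5 p \<longleftrightarrow> p \<in> gadget_walks 0" for p
    using walk_to_sink_in_gadget_walks[of p 0]
    by (auto simp: is_path_def gadget_walks_def gadget_arcs_def gadget_tail_def gadget_head_def)
  moreover have "gadget_paths = set ` gadget_walks 0"
    by (simp add: gadget_paths_def gadget_walks_def)
  ultimately show ?thesis by blast
qed

lemma gadget_in_classes:
  assumes "\<forall>e\<in>gadget_arcs. 0 \<le> \<beta> e" "G \<in> {sym_congestion_games, sym_network_games}"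
  shows "(\<lambda>_. 0, \<beta>, gadget_paths) \<in> G"
proof -
  have game: "sym_game gadget_arcs (\<lambda>_. 0) \<beta> gadget_paths"
    using assms(1) by (auto simp: sym_game_def gadget_arcs_def gadget_paths_def)
  then have "(\<lambda>_. 0, \<beta>, gadget_paths) \<in> sym_congestion_games"
    by (auto simp: sym_congestion_games_def)
  moreover have "(\<lambda>_. 0, \<beta>, gadget_paths) \<in> sym_network_games"
    unfolding sym_network_games_def using game gadget_paths_eq by blast
  ultimately show ?thesis using assms(2) by blast
qed

lemma gadget_social_cost_pos:
  assumes \<beta>: "\<forall>e\<in>gadget_arcs. 0 \<le> \<beta> e" "0 < \<beta> 0" "0 < \<beta> 1" and "0 < x" "0 \<le> y"
    and P: "P \<in> gadget_paths \<times> gadget_paths"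
  shows "0 < social_cost x y (\<lambda>_. 0) \<beta> P"
proof -
  obtain P1 P2 where P12: "P = (P1, P2)" "P1 \<in> gadget_paths" "P2 \<in> gadget_paths" using P by auto
  then obtain r where r: "r \<in> P1" "r \<in> {0, 1}" by (auto simp: gadget_paths_def)
  have arcs: "P1 \<subseteq> gadget_arcs" "P2 \<subseteq> gadget_arcs" "finite P1"
    using P12 by (auto simp: gadget_paths_def gadget_arcs_def)
  have load: "x \<le> load x y (P1, P2) e" "0 \<le> load x y (P1, P2) e" if "e \<in> P1" for e
    using that assms(4,5) by (auto simp: load_def)
  have "0 < \<beta> r * load x y (P1, P2) r" using r \<beta> load[of r] assms(4) by auto
  also have "\<dots> \<le> (\<Sum>e\<in>P1. \<beta> e * load x y (P1, P2) e)"
    using arcs \<beta>(1) load r(1) by (intro member_le_sum) auto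
  finally have "0 < cost1 x y (\<lambda>_. 0) \<beta> (P1, P2)"
    unfolding cost1_def using assms(4) by simp
  moreover have "0 \<le> cost2 x y (\<lambda>_. 0) \<beta> (P1, P2)"
    unfolding cost2_def using arcs \<beta>(1) assms(4,5)
    by (intro mult_nonneg_nonneg sum_nonneg) (auto simp: load_def)
  ultimately show ?thesis unfolding P12 social_cost_def by linarith
qed

lemma poa_class_ge_gadget_ratio:
  assumes "G \<in> {sym_congestion_games, sym_network_games}"
    and \<beta>: "\<forall>e\<in>gadget_arcs. 0 \<le> \<beta> e" "0 < \<beta> 0" "0 < \<beta> 1" and xy: "0 < x" "0 \<le> y"
    and "is_NE x y (\<lambda>_. 0) \<beta> gadget_paths A" "B \<in> gadget_paths \<times> gadget_paths"
  shows "ereal (social_cost x y (\<lambda>_. 0) \<beta> A / social_cost x y (\<lambda>_. 0) \<beta> B) \<le> poa_class x y G"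
proof (rule poa_class_ge_ratio)
  show "(\<lambda>_. 0, \<beta>, gadget_paths) \<in> G" using \<beta>(1) assms(1) by (rule gadget_in_classes)
  show "finite gadget_paths" by (simp add: gadget_paths_def)
qed (use assms gadget_social_cost_pos[OF \<beta> xy] in auto)

definition beta_A :: "real \<Rightarrow> real \<Rightarrow> nat \<Rightarrow> real" where
  "beta_A x y e = [(x + y)^2, x*(x + y), 0, x^2 + x*y + y^2, y*(x + y), 0, 0, (x + y)^2] ! e"

definition beta_B :: "real \<Rightarrow> real \<Rightarrow> nat \<Rightarrow> real" where
  "beta_B x y e = [(x + y)^2*(x - y), x*(x^2 - y^2), 0, x*(x^2 + x*y + y^2), 0, 0,
                   (x + y)*(x^2 + x*y + y^2), 0] ! e"

lemma gadget_A_is_NE: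
  assumes "0 \<le> x" "0 \<le> y"
  shows "is_NE x y (\<lambda>_. 0) (beta_A x y) gadget_paths ({0,2,3,4}, {1,3,5,7})"
proof -
  let ?c1 = "\<lambda>P. cost1 x y (\<lambda>_. 0) (beta_A x y) (P, {1,3,5,7})"
  let ?c2 = "\<lambda>Q. cost2 x y (\<lambda>_. 0) (beta_A x y) ({0,2,3,4}, Q)"
  define h where "h = (x + y) * (x^2 + x*y + y^2)"
  have "?c1 {0,2,3,4} = x*(x + y)^2*(2*x + y)" "?c1 {0,2,3,5,7} = x*(x + y)^2*(2*x + y) + x*h"
    "?c1 {0,6,7} = x*(x + y)^2*(2*x + y)" "?c1 {1,3,4} = x*(x + y)^2*(2*x + y)"
    "?c1 {1,3,5,7} = x*(x + y)^2*(2*x + y) + x*h"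
    "?c2 {0,2,3,4} = y*(x + y)^2*(x + 2*y) + y*h" "?c2 {0,2,3,5,7} = y*(x + y)^2*(x + 2*y) + y*h"
    "?c2 {0,6,7} = y*(x + y)^2*(x + 2*y)" "?c2 {1,3,4} = y*(x + y)^2*(x + 2*y)"
    "?c2 {1,3,5,7} = y*(x + y)^2*(x + 2*y)"
    unfolding h_def by (simp add: cost1_def cost2_def load_def beta_A_def; algebra)+
  moreover have "0 \<le> x*h" "0 \<le> y*h" unfolding h_def using assms by simp_all
  ultimately show ?thesis by (simp add: is_NE_def gadget_paths_def)
qed

lemma gadget_A_social_costs:
  "social_cost x y (\<lambda>_. 0) (beta_A x y) ({0,2,3,4}, {1,3,5,7}) = num_A x y"
  "social_cost x y (\<lambda>_. 0) (beta_A x y) ({1,3,4}, {0,6,7}) = den_A x y"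
  by (simp add: social_cost_def cost1_def cost2_def load_def beta_A_def num_A_def den_A_def; algebra)+

lemma gadget_B_is_NE:
  assumes "0 \<le> y" "y \<le> x"
  shows "is_NE x y (\<lambda>_. 0) (beta_B x y) gadget_paths ({0,2,3,4}, {1,3,5,7})"
proof -
  let ?c1 = "\<lambda>P. cost1 x y (\<lambda>_. 0) (beta_B x y) (P, {1,3,5,7})"
  let ?c2 = "\<lambda>Q. cost2 x y (\<lambda>_. 0) (beta_B x y) ({0,2,3,4}, Q)"
  define h where "h = y*(x + y)*(x^3 - y^3)"
  have "?c1 {0,2,3,4} = x^3*(x + y)*(2*x + y)" "?c1 {0,2,3,5,7} = x^3*(x + y)*(2*x + y)"
    "?c1 {0,6,7} = x^3*(x + y)*(2*x + y)" "?c1 {1,3,4} = x^3*(x + y)*(2*x + y)"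
    "?c1 {1,3,5,7} = x^3*(x + y)*(2*x + y)"
    "?c2 {0,2,3,4} = x^2*y*(x + y)*(x + 2*y) + h" "?c2 {0,2,3,5,7} = x^2*y*(x + y)*(x + 2*y) + h"
    "?c2 {0,6,7} = x^2*y*(x + y)*(x + 2*y)" "?c2 {1,3,4} = x^2*y*(x + y)*(x + 2*y)"
    "?c2 {1,3,5,7} = x^2*y*(x + y)*(x + 2*y)"
    unfolding h_def by (simp add: cost1_def cost2_def load_def beta_B_def; algebra)+
  moreover have "0 \<le> h" unfolding h_def using assms by (simp add: power_mono)
  ultimately show ?thesis by (simp add: is_NE_def gadget_paths_def)
qed

lemma gadget_B_social_costs:
  "social_cost x y (\<lambda>_. 0) (beta_B x y) ({0,2,3,4}, {1,3,5,7}) = x * num_B x y"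
  "social_cost x y (\<lambda>_. 0) (beta_B x y) ({1,3,4}, {0,6,7}) = x * den_B x y"
  by (simp add: social_cost_def cost1_def cost2_def load_def beta_B_def num_B_def den_B_def; algebra)+

section \<open>The price of anarchy\<close>

lemma poa_class_regime_A:
  assumes G: "G \<in> {sym_congestion_games, sym_network_games}"
    and xy: "0 < x" "0 \<le> y" "y \<le> x" "sigma_cubic x y \<le> 0"
  shows "poa_class x y G = ereal (num_A x y / den_A x y)"
proof (rule antisym)
  show "poa_class x y G \<le> ereal (num_A x y / den_A x y)"
    using poa_class_le_by_certificate[OF G poa_certificate_A[OF xy]] .
  have "\<forall>e\<in>gadget_arcs. 0 \<le> beta_A x y e" "0 < beta_A x y 0" "0 < beta_A x y 1"
    using xy by (auto simp: gadget_arcs_def beta_A_def)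
  then have "ereal (social_cost x y (\<lambda>_. 0) (beta_A x y) ({0,2,3,4}, {1,3,5,7})
      / social_cost x y (\<lambda>_. 0) (beta_A x y) ({1,3,4}, {0,6,7})) \<le> poa_class x y G"
    using xy by (intro poa_class_ge_gadget_ratio[OF G] gadget_A_is_NE) (auto simp: gadget_paths_def)
  then show "ereal (num_A x y / den_A x y) \<le> poa_class x y G"
    unfolding gadget_A_social_costs .
qed

lemma poa_class_regime_B:
  assumes G: "G \<in> {sym_congestion_games, sym_network_games}"
    and xy: "0 \<le> y" "y < x" "0 \<le> sigma_cubic x y"
  shows "poa_class x y G = ereal (num_B x y / den_B x y)"
proof (rule antisym)
  have "0 < x" "0 < 2*x + y" using xy by linarith+
  then have "x*(2*x + y)*num_B x y / (x*(2*x + y)*den_B x y) = num_B x y / den_B x y" by simp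
  then show "poa_class x y G \<le> ereal (num_B x y / den_B x y)"
    using poa_class_le_by_certificate[OF G poa_certificate_B[OF \<open>0 < x\<close> xy(1,3)]] by simp
  have "y^2 < x^2" using xy by (simp add: power_strict_mono)
  then have "\<forall>e\<in>gadget_arcs. 0 \<le> beta_B x y e" "0 < beta_B x y 0" "0 < beta_B x y 1"
    using xy by (auto simp: gadget_arcs_def beta_B_def)
  then have "ereal (social_cost x y (\<lambda>_. 0) (beta_B x y) ({0,2,3,4}, {1,3,5,7})
      / social_cost x y (\<lambda>_. 0) (beta_B x y) ({1,3,4}, {0,6,7})) \<le> poa_class x y G"
    using xy \<open>0 < x\<close> by (intro poa_class_ge_gadget_ratio[OF G] gadget_B_is_NE) (auto simp: gadget_paths_def)
  then show "ereal (num_B x y / den_B x y) \<le> poa_class x y G"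
    unfolding gadget_B_social_costs using \<open>0 < x\<close> by simp
qed

definition poa_value_A :: "real \<Rightarrow> real \<Rightarrow> real" where
  "poa_value_A w1 w2 = (2*w1^4 + 6*w1^3*w2 + 8*w1^2*w2^2 + 6*w1*w2^3 + 2*w2^4) /
     (2*w1^4 + 3*w1^3*w2 + 4*w1^2*w2^2 + 3*w1*w2^3 + 2*w2^4 + w1*w2*min (w1^2) (w2^2))"

definition poa_value_B :: "real \<Rightarrow> real \<Rightarrow> real" where
  "poa_value_B w1 w2 = (2*w1^3*w2 + 4*w1^2*w2^2 + 2*w1*w2^3 + 2 * max (w1^4 + w1^3*w2) (w1*w2^3 + w2^4)) /
     (w1^3*w2 + 2*w1^2*w2^2 + w1*w2^3 + 2*w1*w2*min (w1^2) (w2^2)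
      + 2 * max (w1^4) (w2^4) + min (w1^4) (w2^4))"

lemma poa_value_A_commute: "poa_value_A w1 w2 = poa_value_A w2 w1"
  unfolding poa_value_A_def by (simp add: min.commute algebra_simps)

lemma poa_value_B_commute: "poa_value_B w1 w2 = poa_value_B w2 w1"
  unfolding poa_value_B_def by (simp add: min.commute max.commute algebra_simps)

lemma poa_value_A_eq:
  assumes "0 \<le> w2" "w2 \<le> w1"
  shows "poa_value_A w1 w2 = num_A w1 w2 / den_A w1 w2"
proof -
  have "min (w1^2) (w2^2) = w2^2" using assms by (simp add: power_mono)
  then have "2*w1^4 + 3*w1^3*w2 + 4*w1^2*w2^2 + 3*w1*w2^3 + 2*w2^4 + w1*w2*min (w1^2) (w2^2)
      = den_A w1 w2"
    unfolding den_A_def by algebra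
  then show ?thesis by (simp add: poa_value_A_def num_A_def)
qed

lemma poa_value_B_eq:
  assumes "0 \<le> w2" "w2 \<le> w1"
  shows "poa_value_B w1 w2 = num_B w1 w2 / den_B w1 w2"
proof -
  have sq: "w2^2 \<le> w1^2" "w2^4 \<le> w1^4" using assms by (simp_all add: power_mono)
  have "w1*w2*w2^2 \<le> w1*w2*w1^2" using sq assms by (simp add: mult_left_mono)
  then have "w1*w2^3 + w2^4 \<le> w1^4 + w1^3*w2"
    using sq by (simp add: power2_eq_square power3_eq_cube power4_eq_xxxx algebra_simps)
  then have "2*w1^3*w2 + 4*w1^2*w2^2 + 2*w1*w2^3 + 2 * max (w1^4 + w1^3*w2) (w1*w2^3 + w2^4)
      = num_B w1 w2"
    unfolding num_B_def by (simp add: max_def)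
  moreover have "w1^3*w2 + 2*w1^2*w2^2 + w1*w2^3 + 2*w1*w2*min (w1^2) (w2^2)
      + 2 * max (w1^4) (w2^4) + min (w1^4) (w2^4) = den_B w1 w2"
    using sq unfolding den_B_def by (simp add: power2_eq_square power3_eq_cube)
  ultimately show ?thesis by (simp add: poa_value_B_def)
qed

lemma poa_class_heavier_first:
  assumes "0 \<le> w2" "w2 \<le> w1" "0 < w1" "G \<in> {sym_congestion_games, sym_network_games}"
  shows "(w2 / sigma \<le> w1 \<and> w1 \<le> sigma * w2 \<longrightarrow> poa_class w1 w2 G = ereal (poa_value_A w1 w2)) \<and>
    (sigma * w2 \<le> w1 \<or> w1 \<le> w2 / sigma \<longrightarrow> poa_class w1 w2 G = ereal (poa_value_B w1 w2))"
proof (intro conjI impI)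
  assume "w2 / sigma \<le> w1 \<and> w1 \<le> sigma * w2"
  then have "sigma_cubic w1 w2 \<le> 0" using sigma_cubic_nonpos assms(3) by blast
  then show "poa_class w1 w2 G = ereal (poa_value_A w1 w2)"
    using poa_class_regime_A[OF assms(4,3,1,2)] poa_value_A_eq[OF assms(1,2)] by simp
next
  have "1 < sigma" using sigma_root(1) by simp
  then have "w1 < sigma * w1" using assms(3) by simp
  then have "w2 / sigma < w1" using assms(2) sigma_root(1) by (simp add: pos_divide_less_eq mult.commute)
  moreover assume "sigma * w2 \<le> w1 \<or> w1 \<le> w2 / sigma"
  ultimately have "sigma * w2 \<le> w1" by linarith
  with \<open>w1 < sigma * w1\<close> have "w2 \<noteq> w1" by auto
  then have "w2 < w1" using assms(2) by simp
  moreover have "0 \<le> sigma_cubic w1 w2" using sigma_cubic_nonneg[OF assms(1) \<open>sigma * w2 \<le> w1\<close>] .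
  ultimately show "poa_class w1 w2 G = ereal (poa_value_B w1 w2)"
    using poa_class_regime_B[OF assms(4,1)] poa_value_B_eq[OF assms(1,2)] by simp
qed

theorem theorem5:
  fixes w1 w2 :: real
  assumes "w1 \<ge> 0" "w2 \<ge> 0" "w1 + w2 > 0"
  shows "\<forall>G \<in> {sym_congestion_games, sym_network_games}.
    (w2 / sigma \<le> w1 \<and> w1 \<le> sigma * w2 \<longrightarrow>
       poa_class w1 w2 G = ereal
         ((2*w1^4 + 6*w1^3*w2 + 8*w1^2*w2^2 + 6*w1*w2^3 + 2*w2^4) /
          (2*w1^4 + 3*w1^3*w2 + 4*w1^2*w2^2 + 3*w1*w2^3 + 2*w2^4 + w1*w2*min (w1^2) (w2^2)))) \<and>
    (w1 \<ge> sigma * w2 \<or> w1 \<le> w2 / sigma \<longrightarrow>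
       poa_class w1 w2 G = ereal
         ((2*w1^3*w2 + 4*w1^2*w2^2 + 2*w1*w2^3 + 2 * max (w1^4 + w1^3*w2) (w1*w2^3 + w2^4)) /
          (w1^3*w2 + 2*w1^2*w2^2 + w1*w2^3 + 2*w1*w2*min (w1^2) (w2^2)
           + 2 * max (w1^4) (w2^4) + min (w1^4) (w2^4))))"
proof -
  have "0 < sigma" using sigma_root(1) by simp
  then have regimes_symmetric:
    "w2 / sigma \<le> w1 \<and> w1 \<le> sigma * w2 \<longleftrightarrow> w1 / sigma \<le> w2 \<and> w2 \<le> sigma * w1"
    "sigma * w2 \<le> w1 \<or> w1 \<le> w2 / sigma \<longleftrightarrow> sigma * w1 \<le> w2 \<or> w2 \<le> w1 / sigma"
    by (auto simp: divide_le_eq le_divide_eq mult.commute)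
  have "(w2 / sigma \<le> w1 \<and> w1 \<le> sigma * w2 \<longrightarrow> poa_class w1 w2 G = ereal (poa_value_A w1 w2)) \<and>
    (sigma * w2 \<le> w1 \<or> w1 \<le> w2 / sigma \<longrightarrow> poa_class w1 w2 G = ereal (poa_value_B w1 w2))"
    if G: "G \<in> {sym_congestion_games, sym_network_games}" for G
  proof (cases "w2 \<le> w1")
    case True
    with assms have "0 < w1" by linarith
    with True show ?thesis using poa_class_heavier_first[OF assms(2) _ _ G] by blast
  next
    case False
    with assms have "w1 \<le> w2" "0 < w2" by linarith+
    then show ?thesis
      using poa_class_heavier_first[OF assms(1) _ _ G] regimes_symmetric poa_class_swap[of w1 w2 G]
        poa_value_A_commute[of w1 w2] poa_value_B_commute[of w1 w2]
      by simp
  qed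
  then show ?thesis unfolding poa_value_A_def poa_value_B_def by blast
qed

end
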